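(* Let $I$ be an interpretation of bounded range, and let $\mathcal{C}$ be a class of (possibly colored) graphs of locally almost bounded degree. Then $I(\mathcal{C})=\{I(G):G\in\mathcal{C}\}$ is locally almost near-covered.
   Context: Graphs are finite, simple, and may be colored by unary predicates; graph-theoretic properties refer to the underlying graph. $N^G(v)$ is the set of neighbors of $v$; $N_r^G(v)$ is the closed $r$-neighborhood of $v$; $\mathrm{dist}_G$ is graph distance. A class $\mathcal{C}$ has locally almost bounded degree if there exist $f,d:\mathbb{N}\to\mathbb{N}$ such that for every $r$, every $G\in\mathcal{C}$ and every $v\in V(G)$, $N_r^G(v)$ contains at most $f(r)$ vertices of degree larger than $d(r)$ in $G$. An interpretation $I=(\psi,\delta)$ consists of first-order formulas $\psi(x,y)$, $\delta(x)$ in the signature of (colored) graphs, $\psi$ symmetric and irreflexive; $I(G)$ has vertex set $\{v:G\models\delta(v)\}$ and edges $uv$ ($u\ne v$) with $G\models\psi(u,v)$. $\psi$ has range $b$ if for all $G$ and $u,v$, $\mathrm{dist}_G(u,v)>b$ implies $G\not\models\psi(u,v)$; $I$ has bounded range if $\psi$ has range $b$ for some $b$. Two vertices are $k$-near-twins in $G$ if $|N^G(u)\,\Delta\,N^G(v)|\le k$. $G$ is $(k,m)$-near-covered if every set of pairwise non-$k$-near-twin vertices has size at most $m$. A class is locally almost near-covered if there exist $k,m:\mathbb{N}\to\mathbb{N}$ such that for every $r$, every graph $G$ in the class and every $v\in V(G)$, $G[N_r^G(v)]$ is $(k(r),m(r))$-near-covered. *)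

theory Defs
  imports Main
begin

record 'v cgraph =
  verts :: "'v set"
  adj :: "'v \<Rightarrow> 'v \<Rightarrow> bool"
  col :: "nat \<Rightarrow> 'v set"

definition wf_cgraph :: "('v, 'b) cgraph_scheme \<Rightarrow> bool" where
  "wf_cgraph G \<longleftrightarrow> finite (verts G)
     \<and> (\<forall>u v. adj G u v \<longrightarrow> adj G v u)
     \<and> (\<forall>u. \<not> adj G u u)
     \<and> (\<forall>u v. adj G u v \<longrightarrow> u \<in> verts G \<and> v \<in> verts G)
     \<and> (\<forall>i. col G i \<subseteq> verts G)"

definition nbrs :: "'v cgraph \<Rightarrow> 'v \<Rightarrow> 'v set" where
  "nbrs G v = {u \<in> verts G. adj G v u}"

definition degree :: "'v cgraph \<Rightarrow> 'v \<Rightarrow> nat" where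
  "degree G v = card (nbrs G v)"

fun reach :: "'v cgraph \<Rightarrow> nat \<Rightarrow> 'v \<Rightarrow> 'v \<Rightarrow> bool" where
  "reach G 0 u v = (u = v)"
| "reach G (Suc n) u v = (reach G n u v \<or> (\<exists>w. reach G n u w \<and> adj G w v))"

definition ball :: "'v cgraph \<Rightarrow> nat \<Rightarrow> 'v \<Rightarrow> 'v set" where
  "ball G r v = {u \<in> verts G. reach G r v u}"

definition induced :: "'v cgraph \<Rightarrow> 'v set \<Rightarrow> 'v cgraph" where
  "induced G X = \<lparr> verts = verts G \<inter> X,
                    adj = (\<lambda>u v. adj G u v \<and> u \<in> X \<and> v \<in> X),
                    col = (\<lambda>i. col G i \<inter> X) \<rparr>"

datatype fm =
    Eq nat nat
  | Adj nat nat
  | Col nat nat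
  | Neg fm
  | Conj fm fm
  | Ex nat fm

fun sat :: "'v cgraph \<Rightarrow> (nat \<Rightarrow> 'v) \<Rightarrow> fm \<Rightarrow> bool" where
  "sat G s (Eq x y) = (s x = s y)"
| "sat G s (Adj x y) = adj G (s x) (s y)"
| "sat G s (Col i x) = (s x \<in> col G i)"
| "sat G s (Neg \<phi>) = (\<not> sat G s \<phi>)"
| "sat G s (Conj \<phi> \<psi>) = (sat G s \<phi> \<and> sat G s \<psi>)"
| "sat G s (Ex x \<phi>) = (\<exists>a\<in>verts G. sat G (s(x := a)) \<phi>)"

text \<open>Binary formula \<open>\<psi>(x,y)\<close> with x = variable 0, y = variable 1;
  unary formula \<open>\<delta>(x)\<close> with x = variable 0.\<close>
definition sat2 :: "'v cgraph \<Rightarrow> fm \<Rightarrow> 'v \<Rightarrow> 'v \<Rightarrow> bool" where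
  "sat2 G \<psi> u v = sat G (\<lambda>i. if i = 1 then v else u) \<psi>"

definition sat1 :: "'v cgraph \<Rightarrow> fm \<Rightarrow> 'v \<Rightarrow> bool" where
  "sat1 G \<delta> u = sat G (\<lambda>_. u) \<delta>"

text \<open>Graphs are finite; vertex type nat represents all finite graphs up to isomorphism.\<close>
definition is_interpretation :: "fm \<Rightarrow> fm \<Rightarrow> bool" where
  "is_interpretation \<psi> \<delta> \<longleftrightarrow>
     (\<forall>G :: nat cgraph. wf_cgraph G \<longrightarrow>
        (\<forall>u\<in>verts G. \<forall>v\<in>verts G. sat2 G \<psi> u v \<longleftrightarrow> sat2 G \<psi> v u)
      \<and> (\<forall>u\<in>verts G. \<not> sat2 G \<psi> u u))"

definition interp :: "fm \<Rightarrow> fm \<Rightarrow> 'v cgraph \<Rightarrow> 'v cgraph" where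
  "interp \<psi> \<delta> G =
     (let W = {v \<in> verts G. sat1 G \<delta> v} in
      \<lparr> verts = W,
        adj = (\<lambda>u v. u \<in> W \<and> v \<in> W \<and> u \<noteq> v \<and> sat2 G \<psi> u v),
        col = (\<lambda>_. {}) \<rparr>)"

definition has_range :: "fm \<Rightarrow> nat \<Rightarrow> bool" where
  "has_range \<psi> b \<longleftrightarrow>
     (\<forall>G :: nat cgraph. wf_cgraph G \<longrightarrow>
        (\<forall>u\<in>verts G. \<forall>v\<in>verts G. \<not> reach G b u v \<longrightarrow> \<not> sat2 G \<psi> u v))"

definition locally_almost_bounded_degree :: "'v cgraph set \<Rightarrow> bool" where
  "locally_almost_bounded_degree C \<longleftrightarrow>
     (\<exists>f d :: nat \<Rightarrow> nat. \<forall>r. \<forall>G\<in>C. \<forall>v\<in>verts G.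
        card {u \<in> ball G r v. degree G u > d r} \<le> f r)"

definition near_twins :: "'v cgraph \<Rightarrow> nat \<Rightarrow> 'v \<Rightarrow> 'v \<Rightarrow> bool" where
  "near_twins G k u v \<longleftrightarrow>
     card ((nbrs G u - nbrs G v) \<union> (nbrs G v - nbrs G u)) \<le> k"

definition near_covered :: "'v cgraph \<Rightarrow> nat \<Rightarrow> nat \<Rightarrow> bool" where
  "near_covered G k m \<longleftrightarrow>
     (\<forall>S \<subseteq> verts G. (\<forall>u\<in>S. \<forall>v\<in>S. u \<noteq> v \<longrightarrow> \<not> near_twins G k u v) \<longrightarrow> card S \<le> m)"

definition locally_almost_near_covered :: "'v cgraph set \<Rightarrow> bool" where
  "locally_almost_near_covered C \<longleftrightarrow>
     (\<exists>k m :: nat \<Rightarrow> nat. \<forall>r. \<forall>G\<in>C. \<forall>v\<in>verts G.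
        near_covered (induced G (ball G r v)) (k r) (m r))"

end

theory Submission
  imports Defs
begin

(* Vertices within distance r of v in I(G) lie
   within distance r * b of v in G, and near v there are at most f vertices of degree > d; call
   them Y and delete all edges at Y. Around v the balls of radius j of the resulting graph have
   at most (d + 1) ^ j vertices, so the R-balls of its vertices fall into boundedly many
   isomorphism types (taking colours, edges to the enumerated Y and distance layers into account).
   If u, w outside Y are far apart and have isomorphic R-balls, the involution exchanging the two
   balls preserves all atomic facts among vertices that avoid the spheres around u and w. Choosing
   the radius of the exchanged balls anew at each quantifier (the margins shrink by a factor 3 per
   quantifier) shows psi(u, x) <-> psi(w, x) for every x far from u and w; so u and w are
   near-twins in I(G). Hence a set of pairwise non-near-twins has at most f vertices in Y and, per
   isomorphism type, only vertices pairwise close to each other, i.e. boundedly many. *)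

section \<open>Balls, degrees and counting\<close>

lemma adj_sym: "wf_cgraph H \<Longrightarrow> adj H a b \<Longrightarrow> adj H b a"
  by (simp add: wf_cgraph_def)

lemma adj_in_verts: "wf_cgraph H \<Longrightarrow> adj H a b \<Longrightarrow> a \<in> verts H \<and> b \<in> verts H"
  by (simp add: wf_cgraph_def)

lemma reach_refl [simp]: "reach H j a a"
  by (induction j) auto

lemma reach_mono: "reach H j a b \<Longrightarrow> j \<le> k \<Longrightarrow> reach H k a b"
  by (induction k) (auto simp: le_Suc_eq)

lemma reach_add: "reach H j a b \<Longrightarrow> reach H k b c \<Longrightarrow> reach H (j + k) a c"
  by (induction k arbitrary: c) auto

lemma reach_sym:
  assumes "wf_cgraph H" shows "reach H j a b \<Longrightarrow> reach H j b a"
proof (induction j arbitrary: b)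
  case (Suc j)
  then consider "reach H j a b" | c where "reach H j a c" "adj H c b" by auto
  then show ?case
  proof cases
    case 2
    then have "reach H 1 b c" "reach H j c a"
      using Suc.IH adj_sym[OF assms] by (auto intro: exI[of _ b])
    from reach_add[OF this] show ?thesis by simp
  qed (use Suc.IH in auto)
qed simp

lemma reach_in_verts: "wf_cgraph H \<Longrightarrow> a \<in> verts H \<Longrightarrow> reach H j a b \<Longrightarrow> b \<in> verts H"
  by (induction j arbitrary: b) (auto dest: adj_in_verts)

lemma reach_mono_adj: "(\<And>x y. adj H x y \<Longrightarrow> adj H' x y) \<Longrightarrow> reach H j a b \<Longrightarrow> reach H' j a b"
  by (induction j arbitrary: b) auto

lemma finite_verts: "wf_cgraph H \<Longrightarrow> finite (verts H)"
  by (simp add: wf_cgraph_def)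

lemma finite_ball: "wf_cgraph H \<Longrightarrow> finite (ball H r v)"
  by (simp add: ball_def finite_verts)

lemma card_ball_le_pow:
  assumes wf: "wf_cgraph H" and deg: "\<forall>z\<in>ball H n u. degree H z \<le> D"
  shows "card (ball H n u) \<le> (D + 1) ^ n"
  using deg
proof (induction n)
  case 0
  have "ball H 0 u \<subseteq> {u}" by (auto simp: ball_def)
  then have "card (ball H 0 u) \<le> card {u}" by (rule card_mono[rotated]) simp
  then show ?case by simp
next
  case (Suc n)
  have inner: "ball H n u \<subseteq> ball H (Suc n) u" by (auto simp: ball_def)
  then have IH: "card (ball H n u) \<le> (D + 1) ^ n" using Suc by blast
  have fin: "finite (ball H n u)" "finite (nbrs H z)" for z
    using finite_ball[OF wf] finite_verts[OF wf] by (simp_all add: nbrs_def)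
  have "ball H (Suc n) u \<subseteq> ball H n u \<union> (\<Union>z\<in>ball H n u. nbrs H z)"
    using adj_in_verts[OF wf] by (auto simp: ball_def nbrs_def)
  then have "card (ball H (Suc n) u) \<le> card (ball H n u \<union> (\<Union>z\<in>ball H n u. nbrs H z))"
    using fin by (intro card_mono) auto
  also have "\<dots> \<le> card (ball H n u) + card (\<Union>z\<in>ball H n u. nbrs H z)" by (rule card_Un_le)
  also have "card (\<Union>z\<in>ball H n u. nbrs H z) \<le> (\<Sum>z\<in>ball H n u. degree H z)"
    unfolding degree_def by (rule card_UN_le[OF fin(1)])
  also have "\<dots> \<le> card (ball H n u) * D"
    using Suc.prems inner sum_bounded_above[of "ball H n u" "degree H" D] by auto
  also have "card (ball H n u) + card (ball H n u) * D \<le> (D + 1) ^ Suc n"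
    using IH mult_right_mono[OF IH, of "D + 1"] by (simp add: algebra_simps)
  finally show ?case by simp
qed

lemma card_le_if_pairwise_reach:
  assumes "wf_cgraph H" "F \<subseteq> verts H" "\<And>u w. u \<in> F \<Longrightarrow> w \<in> F \<Longrightarrow> reach H k u w"
    and "\<And>u. u \<in> F \<Longrightarrow> card (ball H k u) \<le> m"
  shows "card F \<le> m"
proof (cases "F = {}")
  case False
  then obtain u where u: "u \<in> F" by blast
  then have "F \<subseteq> ball H k u" using assms(2,3) by (auto simp: ball_def)
  then have "card F \<le> card (ball H k u)" using finite_ball[OF assms(1)] by (rule card_mono[rotated])
  then show ?thesis using assms(4)[OF u] by simp
qed simp

lemma near_twins_induced:
  assumes "u \<in> X" "w \<in> X" "finite Z" "card Z \<le> k" "\<And>x. x \<notin> Z \<Longrightarrow> adj H u x \<longleftrightarrow> adj H w x"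
  shows "near_twins (induced H X) k u w"
proof -
  let ?N = "nbrs (induced H X)"
  have "?N a = {x \<in> verts H \<inter> X. adj H a x}" if "a \<in> X" for a
    using that by (auto simp: nbrs_def induced_def)
  then have "(?N u - ?N w) \<union> (?N w - ?N u) \<subseteq> Z" using assms(1,2,5) by blast
  then have "card ((?N u - ?N w) \<union> (?N w - ?N u)) \<le> card Z" by (rule card_mono[OF assms(3)])
  then show ?thesis unfolding near_twins_def using assms(4) by simp
qed

lemma card_le_mult_if_fibres_le:
  assumes "finite A" "finite B" "g ` A \<subseteq> B" "\<And>c. card {x \<in> A. g x = c} \<le> m"
  shows "card A \<le> card B * m"
proof -
  have "(\<Union>c\<in>B. {x \<in> A. g x = c}) = A" using assms(3) by auto
  then have "card A \<le> (\<Sum>c\<in>B. card {x \<in> A. g x = c})"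
    using card_UN_le[OF assms(2), of "\<lambda>c. {x \<in> A. g x = c}"] by simp
  also have "\<dots> \<le> card B * m" using sum_bounded_above[of B _ m] assms(4) by simp
  finally show ?thesis .
qed

lemma card_le_if_fibres_close:
  assumes "wf_cgraph H" "A \<subseteq> verts H" "finite B" "g ` A \<subseteq> B"
    and "\<And>u w. u \<in> A \<Longrightarrow> w \<in> A \<Longrightarrow> g u = g w \<Longrightarrow> reach H k u w"
    and "\<And>u. u \<in> A \<Longrightarrow> card (ball H k u) \<le> m"
  shows "card A \<le> card B * m"
proof (rule card_le_mult_if_fibres_le[OF _ assms(3,4)])
  show "finite A" using finite_verts[OF assms(1)] assms(2) by (rule finite_subset[rotated])
  show "card {x \<in> A. g x = c} \<le> m" for c
    by (rule card_le_if_pairwise_reach[OF assms(1)]) (use assms(2,5,6) in auto)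
qed

definition isolate :: "'v cgraph \<Rightarrow> 'v set \<Rightarrow> 'v cgraph" where
  "isolate G Y = G\<lparr>adj := (\<lambda>a b. adj G a b \<and> a \<notin> Y \<and> b \<notin> Y)\<rparr>"

lemma isolate_simps [simp]:
  "verts (isolate G Y) = verts G" "col (isolate G Y) = col G"
  "adj (isolate G Y) a b \<longleftrightarrow> adj G a b \<and> a \<notin> Y \<and> b \<notin> Y"
  by (simp_all add: isolate_def)

lemma wf_isolate: "wf_cgraph G \<Longrightarrow> wf_cgraph (isolate G Y)"
  by (auto simp: wf_cgraph_def)

lemma reach_isolate_imp_reach: "reach (isolate G Y) j a b \<Longrightarrow> reach G j a b"
  by (rule reach_mono_adj) auto

lemma reach_isolate_into: "reach (isolate G Y) j a y \<Longrightarrow> y \<in> Y \<Longrightarrow> y = a"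
  by (induction j arbitrary: y) auto

lemma degree_isolate_le:
  assumes "wf_cgraph G" shows "degree (isolate G Y) z \<le> (if z \<in> Y then 0 else degree G z)"
proof -
  have "finite (nbrs G z)" using finite_verts[OF assms] by (simp add: nbrs_def)
  moreover have "nbrs (isolate G Y) z \<subseteq> nbrs G z" by (auto simp: nbrs_def)
  ultimately show ?thesis by (auto simp: degree_def nbrs_def card_mono)
qed

lemma card_ball_isolate_le:
  assumes wf: "wf_cgraph G" and deg: "\<forall>z\<in>ball G t v. z \<notin> Y \<longrightarrow> degree G z \<le> d"
    and x: "reach G s v x" and "s + j \<le> t"
  shows "card (ball (isolate G Y) j x) \<le> (d + 1) ^ j"
proof (rule card_ball_le_pow[OF wf_isolate[OF wf]], intro ballI)
  fix z assume "z \<in> ball (isolate G Y) j x"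
  then have z: "reach (isolate G Y) j x z" "z \<in> verts G" unfolding ball_def by auto
  have "reach G (s + j) v z" using reach_add[OF x reach_isolate_imp_reach[OF z(1)]] .
  then have "z \<in> ball G t v"
    using reach_mono[of G "s + j" v z t] \<open>s + j \<le> t\<close> z(2) by (simp add: ball_def)
  then show "degree (isolate G Y) z \<le> d"
    using degree_isolate_le[OF wf, of Y z] deg by (auto split: if_splits)
qed

section \<open>Exchanging two far-apart isomorphic balls\<close>

fun qrank :: "fm \<Rightarrow> nat" where
  "qrank (Eq x y) = 0"
| "qrank (Adj x y) = 0"
| "qrank (Col i x) = 0"
| "qrank (Neg \<phi>) = qrank \<phi>"
| "qrank (Conj \<phi> \<psi>) = max (qrank \<phi>) (qrank \<psi>)"
| "qrank (Ex x \<phi>) = Suc (qrank \<phi>)"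

fun fm_colors :: "fm \<Rightarrow> nat set" where
  "fm_colors (Eq x y) = {}"
| "fm_colors (Adj x y) = {}"
| "fm_colors (Col i x) = {i}"
| "fm_colors (Neg \<phi>) = fm_colors \<phi>"
| "fm_colors (Conj \<phi> \<psi>) = fm_colors \<phi> \<union> fm_colors \<psi>"
| "fm_colors (Ex x \<phi>) = fm_colors \<phi>"

lemma finite_fm_colors: "finite (fm_colors \<phi>)"
  by (induction \<phi>) auto

fun margin :: "nat \<Rightarrow> nat" where
  "margin 0 = 1"
| "margin (Suc n) = 3 * margin n + 1"

lemma margin_pos: "0 < margin n"
  by (induction n) auto

definition iso_radius :: "nat \<Rightarrow> nat" where
  "iso_radius q = Suc (margin q) + margin q + q * (2 * margin q + 1)"

locale ball_iso =
  fixes G :: "'v cgraph" and Y :: "'v set" and K :: "nat set" and R :: nat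
    and u w :: 'v and \<sigma> \<tau> :: "'v \<Rightarrow> 'v"
  assumes wf: "wf_cgraph G"
    and u_in: "u \<in> verts G" and w_in: "w \<in> verts G"
    and u_notin: "u \<notin> Y" and w_notin: "w \<notin> Y"
    and far: "\<not> reach (isolate G Y) (2 * R + 2) u w"
    and \<sigma>_ball: "\<And>a. reach (isolate G Y) R u a \<Longrightarrow> reach (isolate G Y) R w (\<sigma> a) \<and> \<tau> (\<sigma> a) = a"
    and \<tau>_ball: "\<And>b. reach (isolate G Y) R w b \<Longrightarrow> reach (isolate G Y) R u (\<tau> b) \<and> \<sigma> (\<tau> b) = b"
    and \<sigma>_root: "\<sigma> u = w"
    and \<sigma>_adj: "\<And>a b. reach (isolate G Y) R u a \<Longrightarrow> reach (isolate G Y) R u b \<Longrightarrow>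
      adj G (\<sigma> a) (\<sigma> b) \<longleftrightarrow> adj G a b"
    and \<sigma>_col: "\<And>a i. reach (isolate G Y) R u a \<Longrightarrow> i \<in> K \<Longrightarrow> \<sigma> a \<in> col G i \<longleftrightarrow> a \<in> col G i"
    and \<sigma>_adj_Y: "\<And>a y. reach (isolate G Y) R u a \<Longrightarrow> y \<in> Y \<Longrightarrow> adj G (\<sigma> a) y \<longleftrightarrow> adj G a y"
    and \<sigma>_layer: "\<And>a j. reach (isolate G Y) R u a \<Longrightarrow> j \<le> R \<Longrightarrow>
      reach (isolate G Y) j w (\<sigma> a) \<longleftrightarrow> reach (isolate G Y) j u a"
begin

abbreviation reachY :: "nat \<Rightarrow> 'v \<Rightarrow> 'v \<Rightarrow> bool" where
  "reachY \<equiv> reach (isolate G Y)"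

lemma reachY_sym: "reachY j a b \<Longrightarrow> reachY j b a"
  using reach_sym[OF wf_isolate[OF wf]] .

lemma mirror: "ball_iso G Y K R w u \<tau> \<sigma>"
proof
  show "\<not> reachY (2 * R + 2) w u" using far reachY_sym by blast
  show "\<tau> w = u" using \<sigma>_ball[of u] \<sigma>_root by simp
  fix a b i y j assume a: "reachY R w a" and b: "reachY R w b"
  show "adj G (\<tau> a) (\<tau> b) \<longleftrightarrow> adj G a b" using \<sigma>_adj \<tau>_ball a b by metis
  show "i \<in> K \<Longrightarrow> \<tau> a \<in> col G i \<longleftrightarrow> a \<in> col G i" using \<sigma>_col \<tau>_ball a by metis
  show "y \<in> Y \<Longrightarrow> adj G (\<tau> a) y \<longleftrightarrow> adj G a y" using \<sigma>_adj_Y \<tau>_ball a by metis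
  show "j \<le> R \<Longrightarrow> reachY j u (\<tau> a) \<longleftrightarrow> reachY j w a" using \<sigma>_layer \<tau>_ball a by metis
qed (use wf u_in w_in u_notin w_notin \<sigma>_ball \<tau>_ball in auto)

lemmas \<tau>_adj = ball_iso.\<sigma>_adj[OF mirror]
  and \<tau>_col = ball_iso.\<sigma>_col[OF mirror]
  and \<tau>_adj_Y = ball_iso.\<sigma>_adj_Y[OF mirror]
  and \<tau>_layer = ball_iso.\<sigma>_layer[OF mirror]

lemma balls_disjoint: "reachY j u z \<Longrightarrow> reachY k w z \<Longrightarrow> j + k \<le> 2 * R + 2 \<Longrightarrow> False"
proof -
  assume "reachY j u z" "reachY k w z" "j + k \<le> 2 * R + 2"
  then have "reachY (j + k) u w" using reach_add reachY_sym by metis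
  then show False using far reach_mono[of _ "j + k" u w] \<open>j + k \<le> 2 * R + 2\<close> by blast
qed

lemma not_reach_w_if_reach_u: "reachY \<rho> u z \<Longrightarrow> \<rho> \<le> R \<Longrightarrow> j \<le> R \<Longrightarrow> \<not> reachY j w z"
  using balls_disjoint by fastforce

lemma not_reach_u_if_reach_w: "reachY \<rho> w z \<Longrightarrow> \<rho> \<le> R \<Longrightarrow> j \<le> R \<Longrightarrow> \<not> reachY j u z"
  using balls_disjoint by fastforce

definition near :: "nat \<Rightarrow> 'v \<Rightarrow> bool" where
  "near j z \<longleftrightarrow> reachY j u z \<or> reachY j w z"

lemma near_mono: "near j z \<Longrightarrow> j \<le> k \<Longrightarrow> near k z"
  unfolding near_def using reach_mono[of _ j _ z k] by blast

text \<open>\<open>off_sphere \<rho> m z\<close> says that \<open>z\<close> stays more than \<open>m\<close> away from the spheres of radius \<open>\<rho>\<close>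
  around \<open>u\<close> and \<open>w\<close> (for \<open>Suc m \<le> \<rho>\<close>); \<open>swap \<rho>\<close> preserves adjacency only among such vertices.\<close>

definition off_sphere :: "nat \<Rightarrow> nat \<Rightarrow> 'v \<Rightarrow> bool" where
  "off_sphere \<rho> m z \<longleftrightarrow> near (\<rho> - Suc m) z \<or> \<not> near (\<rho> + m) z"

definition swap :: "nat \<Rightarrow> 'v \<Rightarrow> 'v" where
  "swap \<rho> z = (if reachY \<rho> u z then \<sigma> z else if reachY \<rho> w z then \<tau> z else z)"

lemma swap_at_u: "reachY \<rho> u z \<Longrightarrow> swap \<rho> z = \<sigma> z"
  by (simp add: swap_def)

lemma swap_at_w: "reachY \<rho> w z \<Longrightarrow> \<rho> \<le> R \<Longrightarrow> swap \<rho> z = \<tau> z"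
  using not_reach_u_if_reach_w by (simp add: swap_def)

lemma swap_outside: "\<not> near \<rho> z \<Longrightarrow> swap \<rho> z = z"
  by (simp add: swap_def near_def)

lemma swap_cases:
  assumes "\<rho> \<le> R"
  obtains (at_u) "reachY \<rho> u z" "reachY \<rho> w (\<sigma> z)" "swap \<rho> z = \<sigma> z" "reachY R u z"
  | (at_w) "reachY \<rho> w z" "reachY \<rho> u (\<tau> z)" "swap \<rho> z = \<tau> z" "reachY R w z"
  | (outside) "\<not> near \<rho> z" "swap \<rho> z = z"
proof (cases "reachY \<rho> u z")
  case True
  then have "reachY R u z" using assms by (rule reach_mono)
  then show thesis using at_u True \<sigma>_layer assms swap_at_u by blast
next
  case False
  show thesis
  proof (cases "reachY \<rho> w z")
    case True
    then have "reachY R w z" using assms by (rule reach_mono)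
    then show thesis using at_w True \<tau>_layer assms swap_at_w by blast
  qed (use False outside swap_outside near_def in blast)
qed

lemma swap_swap: "\<rho> \<le> R \<Longrightarrow> swap \<rho> (swap \<rho> z) = z"
  by (cases rule: swap_cases[of \<rho> z]) (auto simp: swap_at_u swap_at_w \<sigma>_ball \<tau>_ball)

lemma swap_in_verts: "z \<in> verts G \<Longrightarrow> \<rho> \<le> R \<Longrightarrow> swap \<rho> z \<in> verts G"
  by (cases rule: swap_cases[of \<rho> z])
    (use reach_in_verts[OF wf_isolate[OF wf]] u_in w_in in fastforce)+

lemma swap_fixes_Y: "y \<in> Y \<Longrightarrow> swap \<rho> y = y"
  using reach_isolate_into u_notin w_notin by (metis swap_outside near_def)

lemma swap_notin_Y: "z \<notin> Y \<Longrightarrow> \<rho> \<le> R \<Longrightarrow> swap \<rho> z \<notin> Y"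
  by (cases rule: swap_cases[of \<rho> z]) (use reach_isolate_into u_notin w_notin in metis)+

lemma adj_Y_swap: "y \<in> Y \<Longrightarrow> \<rho> \<le> R \<Longrightarrow> adj G (swap \<rho> z) y \<longleftrightarrow> adj G z y"
  by (cases rule: swap_cases[of \<rho> z]) (auto simp: \<sigma>_adj_Y \<tau>_adj_Y)

lemma col_swap: "i \<in> K \<Longrightarrow> \<rho> \<le> R \<Longrightarrow> swap \<rho> z \<in> col G i \<longleftrightarrow> z \<in> col G i"
  by (cases rule: swap_cases[of \<rho> z]) (auto simp: \<sigma>_col \<tau>_col)

lemma near_swap: "\<rho> \<le> R \<Longrightarrow> j \<le> R \<Longrightarrow> near j (swap \<rho> z) \<longleftrightarrow> near j z"
  unfolding near_def
  by (cases rule: swap_cases[of \<rho> z])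
    (auto simp: \<sigma>_layer \<tau>_layer dest: not_reach_u_if_reach_w not_reach_w_if_reach_u)

lemma off_sphere_swap: "\<rho>' \<le> R \<Longrightarrow> \<rho> + m \<le> R \<Longrightarrow> off_sphere \<rho> m (swap \<rho>' z) \<longleftrightarrow> off_sphere \<rho> m z"
  unfolding off_sphere_def by (simp add: near_swap)

lemma off_sphere_regions:
  assumes "off_sphere \<rho> m z" "0 < m" "Suc m \<le> \<rho>"
  shows "reachY (\<rho> - 2) u z \<or> reachY (\<rho> - 2) w z \<or> \<not> near (\<rho> + 1) z"
proof -
  have "near (\<rho> - Suc m) z \<Longrightarrow> near (\<rho> - 2) z" "\<not> near (\<rho> + m) z \<Longrightarrow> \<not> near (\<rho> + 1) z"
    using assms(2) near_mono by force+
  then show ?thesis using assms(1) unfolding off_sphere_def near_def by blast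
qed

lemma adj_isolate_same_region:
  assumes adj: "adj (isolate G Y) z1 z2" and \<rho>: "2 \<le> \<rho>" "\<rho> \<le> R"
    and z1: "reachY (\<rho> - 2) u z1 \<or> reachY (\<rho> - 2) w z1 \<or> \<not> near (\<rho> + 1) z1"
    and z2: "reachY (\<rho> - 2) u z2 \<or> reachY (\<rho> - 2) w z2 \<or> \<not> near (\<rho> + 1) z2"
  shows "reachY (\<rho> - 2) u z1 \<and> reachY (\<rho> - 2) u z2 \<or> reachY (\<rho> - 2) w z1 \<and> reachY (\<rho> - 2) w z2
    \<or> \<not> near (\<rho> + 1) z1 \<and> \<not> near (\<rho> + 1) z2"
proof -
  have "adj (isolate G Y) z2 z1" using adj_sym[OF wf_isolate[OF wf] adj] .
  then have "reachY (Suc (\<rho> - 2)) a y"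
    if "reachY (\<rho> - 2) a x" "x = z1 \<and> y = z2 \<or> x = z2 \<and> y = z1" for a x y
    using that adj by auto
  moreover have "Suc (\<rho> - 2) = \<rho> - 1" using \<rho>(1) by simp
  ultimately have step: "reachY (\<rho> - 1) a y"
    if "reachY (\<rho> - 2) a x" "x = z1 \<and> y = z2 \<or> x = z2 \<and> y = z1" for a x y
    using that by metis
  have grow: "reachY (\<rho> + 1) a y" if "reachY (\<rho> - 1) a y" for a y
    using that by (rule reach_mono) simp
  have disjoint: "\<not> (reachY (\<rho> - 1) u z \<and> reachY (\<rho> - 2) w z)"
    "\<not> (reachY (\<rho> - 2) u z \<and> reachY (\<rho> - 1) w z)" for z
    using balls_disjoint \<rho> by fastforce+
  show ?thesis using z1 z2 step grow disjoint unfolding near_def by metis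
qed

lemma adj_swap_if_adj:
  assumes "adj G z1 z2" "z1 \<notin> Y" "z2 \<notin> Y" "2 \<le> \<rho>" "\<rho> \<le> R"
    and "reachY (\<rho> - 2) u z1 \<or> reachY (\<rho> - 2) w z1 \<or> \<not> near (\<rho> + 1) z1"
    and "reachY (\<rho> - 2) u z2 \<or> reachY (\<rho> - 2) w z2 \<or> \<not> near (\<rho> + 1) z2"
  shows "adj G (swap \<rho> z1) (swap \<rho> z2)"
proof -
  have inner: "reachY (\<rho> - 2) a z \<Longrightarrow> reachY \<rho> a z \<and> reachY R a z" for a z
    using reach_mono[of _ "\<rho> - 2" a z] assms(5) by simp
  have outer: "\<not> near (\<rho> + 1) z \<Longrightarrow> swap \<rho> z = z" for z
    using near_mono[of \<rho> z "\<rho> + 1"] swap_outside by auto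
  have "adj (isolate G Y) z1 z2" using assms(1-3) by simp
  from adj_isolate_same_region[OF this assms(4-7)] show ?thesis
    using assms(1) inner outer swap_at_u swap_at_w \<sigma>_adj \<tau>_adj assms(5) by metis
qed

lemma adj_swap:
  assumes m: "0 < m" "Suc m \<le> \<rho>" "\<rho> + m \<le> R"
    and z: "off_sphere \<rho> m z1" "off_sphere \<rho> m z2"
  shows "adj G (swap \<rho> z1) (swap \<rho> z2) \<longleftrightarrow> adj G z1 z2"
proof -
  have \<rho>: "2 \<le> \<rho>" "\<rho> \<le> R" using m by auto
  consider "z1 \<in> Y" | "z2 \<in> Y" | "z1 \<notin> Y" "z2 \<notin> Y" by blast
  then show ?thesis
  proof cases
    case 1
    then show ?thesis using adj_Y_swap[OF 1 \<rho>(2)] swap_fixes_Y adj_sym[OF wf] by metis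
  next
    case 2
    then show ?thesis using adj_Y_swap[OF 2 \<rho>(2)] swap_fixes_Y by metis
  next
    case 3
    have regions: "reachY (\<rho> - 2) u z \<or> reachY (\<rho> - 2) w z \<or> \<not> near (\<rho> + 1) z"
      if "off_sphere \<rho> m z" for z
      using off_sphere_regions[OF that m(1,2)] .
    have "off_sphere \<rho> m (swap \<rho> z1)" "off_sphere \<rho> m (swap \<rho> z2)"
      using z off_sphere_swap \<rho>(2) m(3) by auto
    moreover have "swap \<rho> z1 \<notin> Y" "swap \<rho> z2 \<notin> Y" using 3 swap_notin_Y \<rho>(2) by auto
    ultimately have "adj G (swap \<rho> z1) (swap \<rho> z2) \<Longrightarrow> adj G z1 z2"
      using adj_swap_if_adj[of "swap \<rho> z1" "swap \<rho> z2" \<rho>] regions swap_swap \<rho> by metis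
    moreover have "adj G z1 z2 \<Longrightarrow> adj G (swap \<rho> z1) (swap \<rho> z2)"
      using adj_swap_if_adj 3 \<rho> regions z by blast
    ultimately show ?thesis by blast
  qed
qed

definition admissible :: "nat \<Rightarrow> nat \<Rightarrow> bool" where
  "admissible n \<rho> \<longleftrightarrow> Suc (margin n) \<le> \<rho> \<and> \<rho> + margin n + n * (2 * margin n + 1) \<le> R"

lemma swap_eq_if_near: "near j z \<Longrightarrow> j \<le> \<rho> \<Longrightarrow> \<rho> \<le> \<rho>' \<Longrightarrow> \<rho>' \<le> R \<Longrightarrow> swap \<rho>' z = swap \<rho> z"
  unfolding near_def
  using reach_mono[of _ j _ z \<rho>] reach_mono[of _ j _ z \<rho>'] swap_at_u swap_at_w by force

text \<open>If the new vertex \<open>a\<close> is too close to the spheres of radius \<open>\<rho>\<close>, the radius moves out by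
  \<open>2 * m + 1\<close> (\<open>m = margin n\<close>): then \<open>a\<close> lies well inside, and since \<open>margin (Suc n) = 3 * m + 1\<close>
  the new critical annulus \<open>(\<rho> + m, \<rho> + 3 * m + 1]\<close> lies in the old one.\<close>

lemma refine_radius:
  assumes "admissible (Suc n) \<rho>"
  obtains \<rho>' where "admissible n \<rho>'" "off_sphere \<rho>' (margin n) a"
    "\<And>z. off_sphere \<rho> (margin (Suc n)) z \<Longrightarrow> off_sphere \<rho>' (margin n) z \<and> swap \<rho>' z = swap \<rho> z"
proof -
  define m M where "m = margin n" and "M = margin (Suc n)"
  have M: "M = 3 * m + 1" unfolding m_def M_def by simp
  have \<rho>: "Suc M \<le> \<rho>" "\<rho> + M + Suc n * (2 * M + 1) \<le> R"
    using assms unfolding admissible_def M_def by auto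
  have "n * (2 * m + 1) \<le> n * (2 * M + 1)" using M by simp
  then have budget: "\<rho> + M + n * (2 * m + 1) + (2 * m + 1) \<le> R" using \<rho>(2) M by simp
  show thesis
  proof (cases "off_sphere \<rho> m a")
    case True
    have "off_sphere \<rho> m z" if "off_sphere \<rho> M z" for z
    proof -
      have "near (\<rho> - Suc M) z \<Longrightarrow> near (\<rho> - Suc m) z" by (erule near_mono) (simp add: M)
      moreover have "near (\<rho> + m) z \<Longrightarrow> near (\<rho> + M) z" by (erule near_mono) (simp add: M)
      ultimately show ?thesis using that unfolding off_sphere_def by blast
    qed
    moreover have "admissible n \<rho>" using \<rho> budget M unfolding admissible_def m_def by simp
    ultimately show thesis using that True unfolding m_def M_def by blast
  next
    case False
    define \<rho>' where "\<rho>' = \<rho> + 2 * m + 1"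
    have "\<rho>' - Suc m = \<rho> + m" unfolding \<rho>'_def by simp
    then have "near (\<rho>' - Suc m) a" using False unfolding off_sphere_def by simp
    then have a: "off_sphere \<rho>' m a" unfolding off_sphere_def by blast
    have adm: "admissible n \<rho>'" using budget M unfolding admissible_def \<rho>'_def m_def by simp
    have "off_sphere \<rho>' m z \<and> swap \<rho>' z = swap \<rho> z" if z: "off_sphere \<rho> M z" for z
    proof (cases "near (\<rho> - Suc M) z")
      case True
      have "\<rho>' \<le> R" using budget M \<rho>'_def by simp
      then have "swap \<rho>' z = swap \<rho> z" using swap_eq_if_near[OF True] \<rho>'_def by simp
      moreover have "near (\<rho>' - Suc m) z" using near_mono[OF True] \<rho>'_def by simp
      ultimately show ?thesis unfolding off_sphere_def by blast
    next
      case False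
      then have far: "\<not> near (\<rho>' + m) z"
        using z M unfolding off_sphere_def \<rho>'_def by (simp add: ac_simps)
      then have "\<not> near \<rho>' z" "\<not> near \<rho> z" using near_mono \<rho>'_def by fastforce+
      then show ?thesis using far swap_outside unfolding off_sphere_def by simp
    qed
    then show thesis using that a adm unfolding m_def M_def by blast
  qed
qed

lemma sat_swap:
  assumes "qrank \<phi> \<le> n" "fm_colors \<phi> \<subseteq> K" "admissible n \<rho>"
    and "\<forall>i. s i \<in> verts G \<and> off_sphere \<rho> (margin n) (s i)"
  shows "sat G (swap \<rho> \<circ> s) \<phi> \<longleftrightarrow> sat G s \<phi>"
  using assms
proof (induction \<phi> arbitrary: n \<rho> s)
  case (Eq x y)
  then have "\<rho> \<le> R" unfolding admissible_def by simp
  then show ?case using swap_swap by (metis comp_apply sat.simps(1))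
next
  case (Adj x y)
  then show ?case using adj_swap[OF margin_pos, of n \<rho> "s x" "s y"] unfolding admissible_def by auto
next
  case (Col i x)
  then show ?case using col_swap unfolding admissible_def by simp
next
  case (Neg \<phi>)
  then show ?case by simp
next
  case (Conj \<phi>1 \<phi>2)
  then show ?case by auto
next
  case (Ex x \<phi>)
  obtain n' where n: "n = Suc n'" and q: "qrank \<phi> \<le> n'" using Ex.prems(1) by (cases n) auto
  have \<rho>: "\<rho> \<le> R" using Ex.prems(3) unfolding admissible_def by simp
  have one_dir: "sat G (swap \<rho> \<circ> s') (Ex x \<phi>)"
    if s': "\<forall>i. s' i \<in> verts G \<and> off_sphere \<rho> (margin n) (s' i)" and sat: "sat G s' (Ex x \<phi>)" for s'
  proof -
    obtain a where a: "a \<in> verts G" "sat G (s'(x := a)) \<phi>" using sat by auto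
    obtain \<rho>' where \<rho>': "admissible n' \<rho>'" "off_sphere \<rho>' (margin n') a"
      "\<And>z. off_sphere \<rho> (margin n) z \<Longrightarrow> off_sphere \<rho>' (margin n') z \<and> swap \<rho>' z = swap \<rho> z"
      using refine_radius Ex.prems(3) unfolding n by blast
    have "\<forall>i. (s'(x := a)) i \<in> verts G \<and> off_sphere \<rho>' (margin n') ((s'(x := a)) i)"
      using a(1) s' \<rho>'(2,3) by simp
    moreover have "fm_colors \<phi> \<subseteq> K" using Ex.prems(2) by simp
    ultimately have "sat G (swap \<rho>' \<circ> s'(x := a)) \<phi>" using Ex.IH[OF q _ \<rho>'(1)] a(2) by blast
    moreover have "swap \<rho>' \<circ> s'(x := a) = (swap \<rho> \<circ> s')(x := swap \<rho>' a)"
      using s' \<rho>'(3) by (auto simp: fun_eq_iff)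
    moreover have "swap \<rho>' a \<in> verts G"
      using swap_in_verts a(1) \<rho>'(1) unfolding admissible_def by simp
    ultimately show ?thesis by auto
  qed
  have "\<forall>i. (swap \<rho> \<circ> s) i \<in> verts G \<and> off_sphere \<rho> (margin n) ((swap \<rho> \<circ> s) i)"
    using Ex.prems(3,4) swap_in_verts off_sphere_swap \<rho> unfolding admissible_def by simp
  moreover have "swap \<rho> \<circ> (swap \<rho> \<circ> s) = s" using swap_swap[OF \<rho>] by (simp add: fun_eq_iff)
  ultimately show ?case using one_dir[of s] one_dir[of "swap \<rho> \<circ> s"] Ex.prems(4) by metis
qed

lemma sat2_swap_root:
  assumes "qrank \<psi> \<le> q" "fm_colors \<psi> \<subseteq> K" "iso_radius q \<le> R"
    and "x \<in> verts G" "\<not> near (2 * margin q + 1) x"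
  shows "sat2 G \<psi> w x \<longleftrightarrow> sat2 G \<psi> u x"
proof -
  define \<rho> where "\<rho> = Suc (margin q)"
  define s where "s = (\<lambda>i :: nat. if i = 1 then x else u)"
  have adm: "admissible q \<rho>" using assms(3) unfolding admissible_def iso_radius_def \<rho>_def by simp
  have "\<not> near \<rho> x" using assms(5) near_mono \<rho>_def by fastforce
  then have swapped: "swap \<rho> \<circ> s = (\<lambda>i. if i = 1 then x else w)"
    using swap_at_u[of \<rho> u] swap_outside \<sigma>_root by (auto simp: s_def fun_eq_iff)
  have "off_sphere \<rho> (margin q) u" unfolding off_sphere_def near_def \<rho>_def by simp
  moreover have "off_sphere \<rho> (margin q) x"
    using assms(5) unfolding off_sphere_def \<rho>_def by (simp add: mult_2)
  ultimately have "\<forall>i. s i \<in> verts G \<and> off_sphere \<rho> (margin q) (s i)"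
    using assms(4) u_in unfolding s_def by auto
  then have "sat G (swap \<rho> \<circ> s) \<psi> \<longleftrightarrow> sat G s \<psi>" by (rule sat_swap[OF assms(1,2) adm])
  then show ?thesis unfolding swapped by (simp add: sat2_def s_def)
qed

end

section \<open>Isomorphism types of balls\<close>

definition relabel :: "'a list \<Rightarrow> 'b list \<Rightarrow> 'a \<Rightarrow> 'b" where
  "relabel xs ys x = ys ! the_inv_into {..<length xs} (nth xs) x"

lemma relabel_nth: "distinct xs \<Longrightarrow> i < length xs \<Longrightarrow> relabel xs ys (xs ! i) = ys ! i"
  by (simp add: relabel_def the_inv_into_f_f inj_on_nth)

type_synonym code =
  "nat \<times> nat set \<times> (nat \<times> nat) set \<times> (nat \<times> nat) set \<times> (nat \<times> nat) set \<times> (nat \<times> nat) set"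

definition ball_code :: "'v::linorder cgraph \<Rightarrow> 'v set \<Rightarrow> nat set \<Rightarrow> nat \<Rightarrow> 'v \<Rightarrow> code" where
  "ball_code G Y K R u =
    (let l = sorted_list_of_set (ball (isolate G Y) R u); n = length l; ys = sorted_list_of_set Y in
     (n, {i. i < n \<and> l ! i = u},
      {(i, j). i < n \<and> j < n \<and> adj G (l ! i) (l ! j)},
      {(c, i). c \<in> K \<and> i < n \<and> l ! i \<in> col G c},
      {(i, j). i < n \<and> j < length ys \<and> adj G (l ! i) (ys ! j)},
      {(i, j). i < n \<and> j \<le> R \<and> reach (isolate G Y) j u (l ! i)}))"

definition ball_codes :: "nat set \<Rightarrow> nat \<Rightarrow> nat \<Rightarrow> nat \<Rightarrow> code set" where
  "ball_codes K M F R = {..M} \<times> Pow {..<M} \<times> Pow ({..<M} \<times> {..<M}) \<times> Pow (K \<times> {..<M})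
     \<times> Pow ({..<M} \<times> {..<F}) \<times> Pow ({..<M} \<times> {..R})"

lemma finite_ball_codes: "finite K \<Longrightarrow> finite (ball_codes K M F R)"
  unfolding ball_codes_def by (intro finite_cartesian_product) auto

lemma ball_code_in_ball_codes:
  assumes "wf_cgraph G" "card (ball (isolate G Y) R u) \<le> M" "finite Y" "card Y \<le> F"
  shows "ball_code G Y K R u \<in> ball_codes K M F R"
  using assms finite_ball[OF wf_isolate[OF assms(1)]]
  by (auto simp: ball_code_def ball_codes_def Let_def)

lemma ball_code_eq_imp_ball_iso:
  fixes G :: "'v::linorder cgraph"
  assumes wf: "wf_cgraph G" and "finite Y"
    and "u \<in> verts G" "w \<in> verts G" "u \<notin> Y" "w \<notin> Y"
    and far: "\<not> reach (isolate G Y) (2 * R + 2) u w"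
    and code: "ball_code G Y K R u = ball_code G Y K R w"
  shows "\<exists>\<sigma> \<tau>. ball_iso G Y K R u w \<sigma> \<tau>"
proof -
  let ?reach = "reach (isolate G Y)"
  define lu lw ys where "lu = sorted_list_of_set (ball (isolate G Y) R u)"
    and "lw = sorted_list_of_set (ball (isolate G Y) R w)" and "ys = sorted_list_of_set Y"
  define n where "n = length lu"
  have distinct: "distinct lu" "distinct lw" "distinct ys" unfolding lu_def lw_def ys_def by auto
  have set_lu: "a \<in> set lu \<longleftrightarrow> ?reach R u a" and set_lw: "a \<in> set lw \<longleftrightarrow> ?reach R w a" for a
    using assms(3,4) reach_in_verts[OF wf_isolate[OF wf]] finite_ball[OF wf_isolate[OF wf]]
    unfolding lu_def lw_def ball_def by auto
  have set_ys: "set ys = Y" unfolding ys_def using \<open>finite Y\<close> by simp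
  have "n = length lw
      \<and> {i. i < n \<and> lu ! i = u} = {i. i < length lw \<and> lw ! i = w}
      \<and> {(i, j). i < n \<and> j < n \<and> adj G (lu ! i) (lu ! j)}
        = {(i, j). i < length lw \<and> j < length lw \<and> adj G (lw ! i) (lw ! j)}
      \<and> {(c, i). c \<in> K \<and> i < n \<and> lu ! i \<in> col G c}
        = {(c, i). c \<in> K \<and> i < length lw \<and> lw ! i \<in> col G c}
      \<and> {(i, j). i < n \<and> j < length ys \<and> adj G (lu ! i) (ys ! j)}
        = {(i, j). i < length lw \<and> j < length ys \<and> adj G (lw ! i) (ys ! j)}
      \<and> {(i, j). i < n \<and> j \<le> R \<and> ?reach j u (lu ! i)}
        = {(i, j). i < length lw \<and> j \<le> R \<and> ?reach j w (lw ! i)}"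
    using code unfolding ball_code_def Let_def prod.inject
      lu_def[symmetric] lw_def[symmetric] ys_def[symmetric] n_def[symmetric] .
  then have len: "n = length lw"
    and root: "i < n \<Longrightarrow> lu ! i = u \<longleftrightarrow> lw ! i = w"
    and adj: "i < n \<Longrightarrow> j < n \<Longrightarrow> adj G (lu ! i) (lu ! j) \<longleftrightarrow> adj G (lw ! i) (lw ! j)"
    and col: "c \<in> K \<Longrightarrow> i < n \<Longrightarrow> lu ! i \<in> col G c \<longleftrightarrow> lw ! i \<in> col G c"
    and adj_Y: "i < n \<Longrightarrow> j < length ys \<Longrightarrow> adj G (lu ! i) (ys ! j) \<longleftrightarrow> adj G (lw ! i) (ys ! j)"
    and layer: "i < n \<Longrightarrow> j \<le> R \<Longrightarrow> ?reach j u (lu ! i) \<longleftrightarrow> ?reach j w (lw ! i)" for i j c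
    by (auto simp: set_eq_iff)
  define \<sigma> \<tau> where "\<sigma> = relabel lu lw" and "\<tau> = relabel lw lu"
  have at_u: "\<exists>i<n. a = lu ! i \<and> \<sigma> a = lw ! i \<and> \<tau> (\<sigma> a) = a" if "?reach R u a" for a
    using that set_lu distinct len relabel_nth unfolding \<sigma>_def \<tau>_def n_def in_set_conv_nth by metis
  have at_w: "\<exists>i<n. b = lw ! i \<and> \<tau> b = lu ! i \<and> \<sigma> (\<tau> b) = b" if "?reach R w b" for b
    using that set_lw distinct len relabel_nth unfolding \<sigma>_def \<tau>_def n_def in_set_conv_nth by metis
  have "ball_iso G Y K R u w \<sigma> \<tau>"
  proof
    fix a b i y j assume a: "?reach R u a"
    then show "?reach R w (\<sigma> a) \<and> \<tau> (\<sigma> a) = a" using at_u len set_lw nth_mem by metis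
    show "?reach R u b \<Longrightarrow> adj G (\<sigma> a) (\<sigma> b) \<longleftrightarrow> adj G a b" using at_u[OF a] at_u adj by metis
    show "i \<in> K \<Longrightarrow> \<sigma> a \<in> col G i \<longleftrightarrow> a \<in> col G i"
      using at_u[OF a] col by metis
    show "y \<in> Y \<Longrightarrow> adj G (\<sigma> a) y \<longleftrightarrow> adj G a y" using at_u[OF a] adj_Y set_ys in_set_conv_nth by metis
    show "j \<le> R \<Longrightarrow> ?reach j w (\<sigma> a) \<longleftrightarrow> ?reach j u a" using at_u[OF a] layer by metis
  next
    fix b assume "?reach R w b"
    then show "?reach R u (\<tau> b) \<and> \<sigma> (\<tau> b) = b" using at_w set_lu nth_mem n_def by metis
  next
    show "\<sigma> u = w" using at_u[of u] root by force
  qed (use assms in auto)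
  then show ?thesis by blast
qed

section \<open>Near-twins in interpretations\<close>

lemma interp_simps [simp]:
  "verts (interp \<psi> \<delta> G) = {v \<in> verts G. sat1 G \<delta> v}"
  "adj (interp \<psi> \<delta> G) a b \<longleftrightarrow>
    a \<in> verts (interp \<psi> \<delta> G) \<and> b \<in> verts (interp \<psi> \<delta> G) \<and> a \<noteq> b \<and> sat2 G \<psi> a b"
  by (simp_all add: interp_def Let_def)

lemma reach_interp_imp_reach:
  fixes G :: "nat cgraph"
  assumes "wf_cgraph G" "has_range \<psi> b"
  shows "reach (interp \<psi> \<delta> G) j v x \<Longrightarrow> reach G (j * b) v x"
proof (induction j arbitrary: x)
  case (Suc j)
  then consider "reach (interp \<psi> \<delta> G) j v x"
    | z where "reach (interp \<psi> \<delta> G) j v z" "adj (interp \<psi> \<delta> G) z x"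
    by auto
  then show ?case
  proof cases
    case 1
    then show ?thesis using Suc.IH reach_mono[of G "j * b" v x "Suc j * b"] by simp
  next
    case 2
    then have "z \<in> verts G" "x \<in> verts G" "sat2 G \<psi> z x" by auto
    then have "reach G b z x" using assms unfolding has_range_def by blast
    with Suc.IH[OF 2(1)] have "reach G (j * b + b) v x" by (rule reach_add)
    then show ?thesis by (simp add: add.commute)
  qed
qed simp

lemma near_twins_interp_if_same_code:
  fixes G :: "nat cgraph"
  assumes wf: "wf_cgraph G" and "finite Y"
    and uw: "u \<in> verts (interp \<psi> \<delta> G)" "w \<in> verts (interp \<psi> \<delta> G)" "u \<in> X" "w \<in> X" "u \<notin> Y" "w \<notin> Y"
    and R: "iso_radius (qrank \<psi>) \<le> R"
    and far: "\<not> reach (isolate G Y) (2 * R + 2) u w"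
    and code: "ball_code G Y (fm_colors \<psi>) R u = ball_code G Y (fm_colors \<psi>) R w"
    and small: "card (ball (isolate G Y) (2 * margin (qrank \<psi>) + 1) u) \<le> D"
      "card (ball (isolate G Y) (2 * margin (qrank \<psi>) + 1) w) \<le> D"
  shows "near_twins (induced (interp \<psi> \<delta> G) X) (2 * D) u w"
proof -
  obtain \<sigma> \<tau> where iso: "ball_iso G Y (fm_colors \<psi>) R u w \<sigma> \<tau>"
    using ball_code_eq_imp_ball_iso[OF wf \<open>finite Y\<close> _ _ uw(5,6) far code] uw(1,2) by auto
  define N where "N x = ball (isolate G Y) (2 * margin (qrank \<psi>) + 1) x" for x
  define Z where "Z = N u \<union> N w"
  have same_adj: "adj (interp \<psi> \<delta> G) u x \<longleftrightarrow> adj (interp \<psi> \<delta> G) w x" if "x \<notin> Z" for x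
  proof (cases "x \<in> verts G")
    case True
    then have "\<not> ball_iso.near G Y u w (2 * margin (qrank \<psi>) + 1) x"
      using that True unfolding Z_def by (simp add: N_def ball_def ball_iso.near_def[OF iso])
    then have "sat2 G \<psi> w x \<longleftrightarrow> sat2 G \<psi> u x"
      using ball_iso.sat2_swap_root[OF iso order.refl subset_refl R True] by blast
    moreover have "x \<noteq> u" "x \<noteq> w" using that True unfolding Z_def by (auto simp: N_def ball_def)
    ultimately show ?thesis using uw by auto
  qed simp
  have "finite Z" using finite_ball[OF wf_isolate[OF wf]] unfolding Z_def N_def by simp
  moreover have "card Z \<le> 2 * D"
  proof -
    have "card Z \<le> card (N u) + card (N w)" unfolding Z_def by (rule card_Un_le)
    then show ?thesis using small unfolding N_def by simp
  qed
  ultimately show ?thesis by (rule near_twins_induced[OF uw(3,4) _ _ same_adj])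
qed

lemma near_covered_interp_if_small_balls:
  fixes G :: "nat cgraph"
  assumes wf: "wf_cgraph G" and R: "R = iso_radius (qrank \<psi>)" and "finite Y" "card Y \<le> f"
    and small: "\<And>x j. x \<in> verts (interp \<psi> \<delta> G) \<Longrightarrow> x \<in> B \<Longrightarrow> j \<le> 2 * R + 2 \<Longrightarrow>
      card (ball (isolate G Y) j x) \<le> (d + 1) ^ j"
  shows "near_covered (induced (interp \<psi> \<delta> G) B) (2 * (d + 1) ^ (2 * margin (qrank \<psi>) + 1))
    (f + card (ball_codes (fm_colors \<psi>) ((d + 1) ^ R) f R) * (d + 1) ^ (2 * R + 2))"
proof -
  define I L where "I = induced (interp \<psi> \<delta> G) B" and "L = 2 * margin (qrank \<psi>) + 1"
  define code codes where "code = ball_code G Y (fm_colors \<psi>) R"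
    and "codes = ball_codes (fm_colors \<psi>) ((d + 1) ^ R) f R"
  have "L \<le> 2 * R + 2" unfolding L_def R iso_radius_def by simp
  have "card S \<le> f + card codes * (d + 1) ^ (2 * R + 2)"
    if S: "S \<subseteq> verts I" and pairwise: "\<forall>u\<in>S. \<forall>w\<in>S. u \<noteq> w \<longrightarrow> \<not> near_twins I (2 * (d + 1) ^ L) u w"
    for S
  proof -
    have in_S: "x \<in> verts (interp \<psi> \<delta> G)" "x \<in> B" if "x \<in> S" for x
      using that S unfolding I_def induced_def by auto
    have close: "reach (isolate G Y) (2 * R + 2) u w" if u: "u \<in> S - Y" and w: "w \<in> S - Y"
      and "code u = code w" for u w
    proof (rule ccontr)
      assume far: "\<not> reach (isolate G Y) (2 * R + 2) u w"
      have "near_twins I (2 * (d + 1) ^ L) u w" unfolding I_def L_def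
      proof (rule near_twins_interp_if_same_code[OF wf \<open>finite Y\<close> _ _ _ _ _ _ _ far])
        show "card (ball (isolate G Y) (2 * margin (qrank \<psi>) + 1) u)
            \<le> (d + 1) ^ (2 * margin (qrank \<psi>) + 1)"
          "card (ball (isolate G Y) (2 * margin (qrank \<psi>) + 1) w)
            \<le> (d + 1) ^ (2 * margin (qrank \<psi>) + 1)"
          using small in_S u w \<open>L \<le> 2 * R + 2\<close> unfolding L_def by blast+
      qed (use u w in_S \<open>code u = code w\<close> R in \<open>simp_all add: code_def\<close>)
      moreover have "u \<noteq> w" using far by auto
      ultimately show False using pairwise u w by blast
    qed
    have "card (S - Y) \<le> card codes * (d + 1) ^ (2 * R + 2)"
    proof (rule card_le_if_fibres_close[OF wf_isolate[OF wf] _ _ _ close])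
      show "S - Y \<subseteq> verts (isolate G Y)" using in_S by auto
      show "finite codes" unfolding codes_def by (rule finite_ball_codes[OF finite_fm_colors])
      show "code ` (S - Y) \<subseteq> codes"
        using ball_code_in_ball_codes[OF wf small \<open>finite Y\<close> \<open>card Y \<le> f\<close>] in_S
        unfolding code_def codes_def by auto
      show "card (ball (isolate G Y) (2 * R + 2) u) \<le> (d + 1) ^ (2 * R + 2)" if "u \<in> S - Y" for u
        using small in_S that by blast
    qed
    moreover have "card (S \<inter> Y) \<le> f" using \<open>card Y \<le> f\<close> card_mono[OF \<open>finite Y\<close>, of "S \<inter> Y"] by simp
    moreover have "card S \<le> card (S \<inter> Y) + card (S - Y)"
      using card_Un_le[of "S \<inter> Y" "S - Y"] by (simp add: Int_Diff_Un)
    ultimately show ?thesis by simp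
  qed
  then show ?thesis unfolding near_covered_def I_def L_def codes_def by blast
qed

lemma near_covered_interp_ball:
  fixes G :: "nat cgraph"
  assumes wf: "wf_cgraph G" and range: "has_range \<psi> b" and R: "R = iso_radius (qrank \<psi>)"
    and hubs: "card {x \<in> ball G (r * b + 2 * R + 2) v. d < degree G x} \<le> f"
  shows "near_covered (induced (interp \<psi> \<delta> G) (ball (interp \<psi> \<delta> G) r v))
    (2 * (d + 1) ^ (2 * margin (qrank \<psi>) + 1))
    (f + card (ball_codes (fm_colors \<psi>) ((d + 1) ^ R) f R) * (d + 1) ^ (2 * R + 2))"
proof (rule near_covered_interp_if_small_balls[OF wf R])
  define Y where "Y = {x \<in> ball G (r * b + 2 * R + 2) v. d < degree G x}"
  show "finite Y" "card Y \<le> f" using finite_ball[OF wf] hubs unfolding Y_def by simp_all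
  show "card (ball (isolate G Y) j x) \<le> (d + 1) ^ j"
    if "x \<in> verts (interp \<psi> \<delta> G)" "x \<in> ball (interp \<psi> \<delta> G) r v" "j \<le> 2 * R + 2" for x j
  proof (rule card_ball_isolate_le[OF wf, where t = "r * b + 2 * R + 2" and s = "r * b"])
    show "\<forall>z\<in>ball G (r * b + 2 * R + 2) v. z \<notin> Y \<longrightarrow> degree G z \<le> d" unfolding Y_def by auto
    show "reach G (r * b) v x"
      using that(2) reach_interp_imp_reach[OF wf range] unfolding ball_def by blast
    show "r * b + j \<le> r * b + 2 * R + 2" using that(3) by simp
  qed
qed

theorem lemma5p9:
  fixes \<psi> \<delta> :: fm and C :: "nat cgraph set" and b :: nat
  assumes "is_interpretation \<psi> \<delta>"
    and "has_range \<psi> b"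
    and "\<forall>G\<in>C. wf_cgraph G"
    and "locally_almost_bounded_degree C"
  shows "locally_almost_near_covered (interp \<psi> \<delta> ` C)"
proof -
  obtain f d :: "nat \<Rightarrow> nat"
    where fd: "\<forall>r. \<forall>G\<in>C. \<forall>v\<in>verts G. card {u \<in> ball G r v. d r < degree G u} \<le> f r"
    using assms(4) unfolding locally_almost_bounded_degree_def by blast
  define R where "R = iso_radius (qrank \<psi>)"
  define s where "s r = r * b + 2 * R + 2" for r
  define k where "k r = 2 * (d (s r) + 1) ^ (2 * margin (qrank \<psi>) + 1)" for r
  define m where "m r = f (s r) + card (ball_codes (fm_colors \<psi>) ((d (s r) + 1) ^ R) (f (s r)) R)
    * (d (s r) + 1) ^ (2 * R + 2)" for r
  have "near_covered (induced H (ball H r v)) (k r) (m r)"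
    if H: "H \<in> interp \<psi> \<delta> ` C" and v: "v \<in> verts H" for r H v
  proof -
    obtain G where G: "G \<in> C" "H = interp \<psi> \<delta> G" using H by blast
    then have "v \<in> verts G" using v by simp
    then show ?thesis
      using near_covered_interp_ball[OF _ assms(2) R_def] fd assms(3) G
      unfolding k_def m_def s_def by blast
  qed
  then show ?thesis unfolding locally_almost_near_covered_def by blast
qed

end
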